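(* Let $S\subseteq\mathbb{M}^\Sigma$ be a masked semilinear set. Then there exists a deterministic automaton $\mathcal{A}$ over $\Sigma$ such that $\Psi(\mathfrak{J}(\mathcal{A}))=S$.
   Context: An automaton is $\mathcal{A}=\langle\Sigma,Q,\delta,Q_0,\alpha\rangle$ with B\"uchi acceptance (a run is accepting if it visits $\alpha$ infinitely often); it is deterministic if $|Q_0|=1$ and $|\delta(q,\sigma)|=1$ for all $q,\sigma$. For $w\in\Sigma^\omega$, $\Psi(w)\in\mathbb{N}_\infty^\Sigma$ gives for each letter its number of occurrences (or $\infty$); $w\sim w'$ iff $\Psi(w)=\Psi(w')$; $\mathfrak{J}(\mathcal{A})=\{w\in\Sigma^\omega:\exists w'\sim w,\ w'\in\mathfrak{L}(\mathcal{A})\}$. $\mathbb{M}^\Sigma=\mathbb{N}_\infty^\Sigma\setminus\mathbb{N}^\Sigma$. A mask is $\mathfrak{m}\in\{0,\infty\}^\Sigma\setminus\{\vec 0\}$; $\vec x\oplus\mathfrak{m}$ has coordinate $\vec x(\sigma)$ where $\mathfrak{m}(\sigma)=0$ and $\infty$ elsewhere. A masked semilinear set is $\bigcup_{\mathfrak{m}}\{\vec x\oplus\mathfrak{m}:\vec x\in S_\mathfrak{m}\}$ over all masks, with each $S_\mathfrak{m}\subseteq\mathbb{N}^\Sigma$ semilinear (possibly empty). *)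

theory Defs
  imports Main "HOL-Library.Extended_Nat"
begin

record 'a nba =
  states :: "nat set"
  trans  :: "nat \<Rightarrow> 'a \<Rightarrow> nat set"
  init   :: "nat set"
  accept :: "nat set"

definition wf_nba :: "'a nba \<Rightarrow> bool" where
  "wf_nba A \<longleftrightarrow> finite (states A) \<and> init A \<subseteq> states A \<and> accept A \<subseteq> states A
     \<and> (\<forall>q\<in>states A. \<forall>s. trans A q s \<subseteq> states A)"

definition deterministic :: "'a nba \<Rightarrow> bool" where
  "deterministic A \<longleftrightarrow> card (init A) = 1 \<and> (\<forall>q\<in>states A. \<forall>s. card (trans A q s) = 1)"

definition is_run :: "'a nba \<Rightarrow> (nat \<Rightarrow> 'a) \<Rightarrow> (nat \<Rightarrow> nat) \<Rightarrow> bool" where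
  "is_run A w r \<longleftrightarrow> r 0 \<in> init A \<and> (\<forall>i. r (Suc i) \<in> trans A (r i) (w i))"

definition accepting_run :: "'a nba \<Rightarrow> (nat \<Rightarrow> nat) \<Rightarrow> bool" where
  "accepting_run A r \<longleftrightarrow> (\<exists>\<^sub>\<infinity> i. r i \<in> accept A)"

definition lang :: "'a nba \<Rightarrow> (nat \<Rightarrow> 'a) set" where
  "lang A = {w. \<exists>r. is_run A w r \<and> accepting_run A r}"

definition parikh :: "(nat \<Rightarrow> 'a) \<Rightarrow> 'a \<Rightarrow> enat" where
  "parikh w s = (if finite {i. w i = s} then enat (card {i. w i = s}) else \<infinity>)"

definition Jclos :: "'a nba \<Rightarrow> (nat \<Rightarrow> 'a) set" where
  "Jclos A = {w. \<exists>w'. parikh w' = parikh w \<and> w' \<in> lang A}"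

definition linear_set :: "('a \<Rightarrow> nat) set \<Rightarrow> bool" where
  "linear_set L \<longleftrightarrow> (\<exists>b (P :: ('a \<Rightarrow> nat) list).
      L = {x. \<exists>c :: nat \<Rightarrow> nat. x = (\<lambda>s. b s + (\<Sum>i<length P. c i * (P ! i) s))})"

definition semilinear :: "('a \<Rightarrow> nat) set \<Rightarrow> bool" where
  "semilinear S \<longleftrightarrow> (\<exists>F. finite F \<and> (\<forall>L\<in>F. linear_set L) \<and> S = \<Union>F)"

definition is_mask :: "('a \<Rightarrow> enat) \<Rightarrow> bool" where
  "is_mask m \<longleftrightarrow> (\<forall>s. m s = 0 \<or> m s = \<infinity>) \<and> m \<noteq> (\<lambda>_. 0)"

definition mask_add :: "('a \<Rightarrow> nat) \<Rightarrow> ('a \<Rightarrow> enat) \<Rightarrow> ('a \<Rightarrow> enat)" where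
  "mask_add x m = (\<lambda>s. if m s = 0 then enat (x s) else \<infinity>)"

definition masked_semilinear :: "('a \<Rightarrow> enat) set \<Rightarrow> bool" where
  "masked_semilinear S \<longleftrightarrow> (\<exists>Sm :: ('a \<Rightarrow> enat) \<Rightarrow> ('a \<Rightarrow> nat) set.
      (\<forall>m. is_mask m \<longrightarrow> semilinear (Sm m)) \<and>
      S = (\<Union>m\<in>{m. is_mask m}. (\<lambda>x. mask_add x m) ` Sm m))"

end

theory Submission
  imports Defs "HOL-Library.FuncSet"
begin

text \<open>For a mask \<open>m\<close> and a linear set \<open>L = b + P\<^sup>*\<close>, a deterministic automaton counts the
  letters of \<open>F = {s. m s = 0}\<close> in bounded counters. It first reads a block whose counts on
  \<open>F\<close> are those of \<open>b\<close>, closed by a separator letter outside \<open>F\<close>, and then blocks whose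
  counts are those of a period, each closed by the separator; an empty block commits it to read
  an enumeration of the letters outside \<open>F\<close> cyclically forever, and only this is accepting.
  So the accepted words are exactly those whose letters in \<open>F\<close> occur finitely often with
  counts given by some vector of \<open>L\<close>, while every other letter occurs infinitely often.
  Finite unions are realised by product automata with a disjunctive acceptance condition, and
  the permutation closure has the same Parikh image as the language itself.\<close>

primrec dba_run :: "('s \<Rightarrow> 'a \<Rightarrow> 's) \<Rightarrow> 's \<Rightarrow> (nat \<Rightarrow> 'a) \<Rightarrow> nat \<Rightarrow> 's" where
  "dba_run d q w 0 = q"
| "dba_run d q w (Suc i) = d (dba_run d q w i) (w i)"

definition dba_lang :: "('s \<Rightarrow> 'a \<Rightarrow> 's) \<Rightarrow> 's \<Rightarrow> 's set \<Rightarrow> (nat \<Rightarrow> 'a) set" where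
  "dba_lang d q Acc = {w. \<exists>\<^sub>\<infinity> i. dba_run d q w i \<in> Acc}"

definition dba_closed :: "'s set \<Rightarrow> ('s \<Rightarrow> 'a \<Rightarrow> 's) \<Rightarrow> 's \<Rightarrow> bool" where
  "dba_closed Q d q \<longleftrightarrow> finite Q \<and> q \<in> Q \<and> (\<forall>p\<in>Q. \<forall>s. d p s \<in> Q)"

lemma dba_run_in_states: "dba_closed Q d q \<Longrightarrow> dba_run d q w i \<in> Q"
  by (induct i) (auto simp: dba_closed_def)

lemma dba_run_eq_foldl: "dba_run d q w n = foldl d q (map w [0..<n])"
  by (induct n) auto

lemma dba_run_trap:
  assumes "\<And>s. d z s = z" "dba_run d q w i = z"
  shows "dba_run d q w (i + k) = z"
  using assms by (induct k) auto

lemma dba_lang_avoids_trap: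
  assumes "\<And>s. d z s = z" "z \<notin> Acc" "w \<in> dba_lang d q Acc"
  shows "dba_run d q w i \<noteq> z"
proof
  assume "dba_run d q w i = z"
  obtain j where "j \<ge> i" "dba_run d q w j \<in> Acc"
    using assms(3) unfolding dba_lang_def INFM_nat_le by blast
  with dba_run_trap[OF assms(1) \<open>dba_run d q w i = z\<close>, of "j - i"] assms(2) show False
    by simp
qed

lemma is_run_iff_dba_run:
  assumes "init A = {q}" "\<And>p s. p \<in> states A \<Longrightarrow> trans A p s = {d p s}"
    and "\<And>i. dba_run d q w i \<in> states A"
  shows "is_run A w r \<longleftrightarrow> r = dba_run d q w"
proof
  assume r: "is_run A w r"
  have "r i = dba_run d q w i" for i
  proof (induct i)
    case 0
    then show ?case using r assms(1) by (simp add: is_run_def)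
  next
    case (Suc i)
    have "r (Suc i) \<in> trans A (r i) (w i)" using r by (simp add: is_run_def)
    then show ?case using Suc assms(2)[OF assms(3)] by simp
  qed
  then show "r = dba_run d q w" by auto
qed (use assms in \<open>auto simp: is_run_def\<close>)

lemma nba_of_dba:
  assumes "dba_closed Q d q"
  shows "\<exists>A :: 'a nba. wf_nba A \<and> deterministic A \<and> lang A = dba_lang d q Acc"
proof -
  have "finite Q" using assms by (simp add: dba_closed_def)
  then obtain f where f: "bij_betw f Q {0..<card Q}" using ex_bij_betw_finite_nat by blast
  then have inj: "inj_on f Q" by (simp add: bij_betw_def)
  define g where "g = inv_into Q f"
  have gf: "p \<in> Q \<Longrightarrow> g (f p) = p" for p using inj by (simp add: g_def)
  define d' where "d' n s = f (d (g n) s)" for n s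
  define A :: "'a nba" where
    "A = \<lparr>states = f ` Q, trans = (\<lambda>n s. {d' n s}), init = {f q}, accept = f ` (Acc \<inter> Q)\<rparr>"
  have run: "dba_run d' (f q) w i = f (dba_run d q w i)" for w i
    by (induct i) (auto simp: d'_def gf[OF dba_run_in_states[OF assms]])
  have "is_run A w r \<longleftrightarrow> r = dba_run d' (f q) w" for w r
    by (rule is_run_iff_dba_run) (use run dba_run_in_states[OF assms] in \<open>auto simp: A_def\<close>)
  moreover have "f (dba_run d q w i) \<in> accept A \<longleftrightarrow> dba_run d q w i \<in> Acc" for w i
    using dba_run_in_states[OF assms] inj by (auto simp: A_def inj_on_def)
  ultimately have "lang A = dba_lang d q Acc"
    by (simp add: lang_def dba_lang_def accepting_run_def run)
  moreover have "wf_nba A" "deterministic A"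
    using assms gf by (auto simp: A_def d'_def wf_nba_def dba_closed_def deterministic_def)
  ultimately show ?thesis by blast
qed

lemma dba_of_nba:
  assumes wf: "wf_nba A" and det: "deterministic A"
  obtains d q where "dba_closed (states A) d q" "lang A = dba_lang d q (accept A)"
proof -
  obtain q where q: "init A = {q}"
    using det by (auto simp: deterministic_def card_1_singleton_iff)
  define d where "d p s = the_elem (trans A p s)" for p s
  have tr: "trans A p s = {d p s}" if "p \<in> states A" for p s
  proof -
    have "card (trans A p s) = 1" using det that by (simp add: deterministic_def)
    then obtain p' where "trans A p s = {p'}" by (auto simp: card_1_singleton_iff)
    then show ?thesis by (simp add: d_def)
  qed
  have closed: "dba_closed (states A) d q"
    unfolding dba_closed_def using wf q tr by (auto simp: wf_nba_def)
  have "is_run A w r \<longleftrightarrow> r = dba_run d q w" for w r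
    by (rule is_run_iff_dba_run[OF q tr dba_run_in_states[OF closed]])
  then have "lang A = dba_lang d q (accept A)"
    by (simp add: lang_def dba_lang_def accepting_run_def)
  with closed show thesis by (rule that)
qed

lemma dba_lang_product_Un:
  "dba_lang (\<lambda>(p, q) s. (d1 p s, d2 q s)) (q1, q2) (Acc1 \<times> UNIV \<union> UNIV \<times> Acc2)
     = dba_lang d1 q1 Acc1 \<union> dba_lang d2 q2 Acc2"
proof -
  have "dba_run (\<lambda>(p, q) s. (d1 p s, d2 q s)) (q1, q2) w i = (dba_run d1 q1 w i, dba_run d2 q2 w i)"
    for w i by (induct i) auto
  then show ?thesis by (simp add: dba_lang_def frequently_disj_iff Collect_disj_eq)
qed

definition det_buchi_parikh_image :: "('a \<Rightarrow> enat) set \<Rightarrow> bool" where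
  "det_buchi_parikh_image X \<longleftrightarrow> (\<exists>A :: 'a nba. wf_nba A \<and> deterministic A \<and> parikh ` lang A = X)"

lemma det_buchi_parikh_image_dba:
  "dba_closed Q d q \<Longrightarrow> det_buchi_parikh_image (parikh ` dba_lang d q Acc)"
  using nba_of_dba unfolding det_buchi_parikh_image_def by metis

lemma det_buchi_parikh_image_empty: "det_buchi_parikh_image {}"
proof -
  have "dba_closed {()} (\<lambda>_ _. ()) ()" by (simp add: dba_closed_def)
  from det_buchi_parikh_image_dba[OF this, of "{}"] show ?thesis by (simp add: dba_lang_def)
qed

lemma det_buchi_parikh_image_Un:
  assumes "det_buchi_parikh_image X" "det_buchi_parikh_image Y"
  shows "det_buchi_parikh_image (X \<union> Y)"
proof -
  obtain A1 A2 :: "'a nba" where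
    A: "wf_nba A1" "deterministic A1" "parikh ` lang A1 = X"
       "wf_nba A2" "deterministic A2" "parikh ` lang A2 = Y"
    using assms by (auto simp: det_buchi_parikh_image_def)
  obtain d1 q1 where 1: "dba_closed (states A1) d1 q1" "lang A1 = dba_lang d1 q1 (accept A1)"
    using dba_of_nba[OF A(1,2)] .
  obtain d2 q2 where 2: "dba_closed (states A2) d2 q2" "lang A2 = dba_lang d2 q2 (accept A2)"
    using dba_of_nba[OF A(4,5)] .
  have prod: "dba_closed (states A1 \<times> states A2) (\<lambda>(p, q) s. (d1 p s, d2 q s)) (q1, q2)"
    using 1(1) 2(1) by (auto simp: dba_closed_def)
  have "det_buchi_parikh_image (parikh ` (dba_lang d1 q1 (accept A1) \<union> dba_lang d2 q2 (accept A2)))"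
    using det_buchi_parikh_image_dba[OF prod, of "accept A1 \<times> UNIV \<union> UNIV \<times> accept A2"]
    by (simp only: dba_lang_product_Un)
  then show ?thesis by (simp only: image_Un A(3,6) flip: 1(2) 2(2))
qed

lemma det_buchi_parikh_image_UN:
  "finite I \<Longrightarrow> (\<And>i. i \<in> I \<Longrightarrow> det_buchi_parikh_image (X i))
    \<Longrightarrow> det_buchi_parikh_image (\<Union>i\<in>I. X i)"
  by (induct I rule: finite_induct)
    (auto intro: det_buchi_parikh_image_empty det_buchi_parikh_image_Un)

lemma parikh_Jclos: "parikh ` Jclos A = parikh ` lang A"
  unfolding Jclos_def by (auto simp: image_def) metis+

lemma foldl_concat_fixpoint:
  "(\<And>xs. xs \<in> set xss \<Longrightarrow> foldl f q xs = q) \<Longrightarrow> foldl f q (concat xss) = q"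
  by (induct xss) auto

lemma count_list_replicate: "count_list (replicate n t) s = (if t = s then n else 0)"
  by (induct n) auto

lemma count_list_concat_replicate:
  "count_list (concat (replicate k xs)) s = k * count_list xs s"
  by (induct k) auto

lemma count_list_map_upt: "count_list (map w [0..<n]) s = card {i. i < n \<and> w i = s}"
proof -
  have "count_list (map w [0..<n]) s = card {i. i < n \<and> s = map w [0..<n] ! i}"
    by (simp add: count_list_eq_length_filter length_filter_conv_card)
  also have "{i. i < n \<and> s = map w [0..<n] ! i} = {i. i < n \<and> w i = s}" by auto
  finally show ?thesis .
qed

lemma finite_masks: "finite {m :: 'a::finite \<Rightarrow> enat. is_mask m}"
proof (rule finite_subset)
  show "{m :: 'a \<Rightarrow> enat. is_mask m} \<subseteq> Pi\<^sub>E UNIV (\<lambda>_. {0, \<infinity>})"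
    by (auto simp: is_mask_def PiE_iff)
qed (rule finite_PiE, auto)

datatype 'v mstate = Count bool 'v | Cycle nat | Sink

locale masked_linear =
  fixes m :: "'a::finite \<Rightarrow> enat" and b :: "'a \<Rightarrow> nat" and P :: "('a \<Rightarrow> nat) list"
  assumes mask: "is_mask m"
begin

definition F :: "'a set" where "F = {s. m s = 0}"

definition L :: "('a \<Rightarrow> nat) set" where
  "L = {x. \<exists>c :: nat \<Rightarrow> nat. x = (\<lambda>s. b s + (\<Sum>i<length P. c i * (P ! i) s))}"

definition sep :: 'a where "sep = (SOME s. s \<notin> F)"

definition cycle :: "'a list" where "cycle = (SOME xs. set xs = - F)"

definition bound :: nat where "bound = Max (range b \<union> (\<Union>p\<in>set P. range p))"

definition restrF :: "('a \<Rightarrow> nat) \<Rightarrow> 'a \<Rightarrow> nat" where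
  "restrF v s = (if s \<in> F then v s else 0)"

lemma sep_notin_F: "sep \<notin> F"
proof -
  have "\<exists>s. s \<notin> F" using mask by (auto simp: is_mask_def F_def)
  then show ?thesis unfolding sep_def by (rule someI_ex)
qed

lemma set_cycle: "set cycle = - F"
  unfolding cycle_def by (rule someI_ex) (simp add: finite_list)

lemma length_cycle_pos: "0 < length cycle"
  using set_cycle sep_notin_F by (cases cycle) auto

lemma base_le_bound: "b s \<le> bound"
  unfolding bound_def by (rule Max_ge) auto

lemma period_le_bound: "p \<in> set P \<Longrightarrow> p s \<le> bound"
  unfolding bound_def by (rule Max_ge) auto

lemma mask_add_cong: "(\<And>s. s \<in> F \<Longrightarrow> x s = y s) \<Longrightarrow> mask_add x m = mask_add y m"
  by (auto simp: mask_add_def F_def)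

lemma base_in_L: "b \<in> L"
  unfolding L_def by (intro CollectI exI[of _ "\<lambda>_. 0"]) simp

lemma L_add_period:
  assumes "x \<in> L" "p \<in> set P"
  shows "(\<lambda>s. x s + p s) \<in> L"
proof -
  obtain c where c: "x = (\<lambda>s. b s + (\<Sum>j<length P. c j * (P ! j) s))"
    using assms(1) by (auto simp: L_def)
  obtain i where i: "i < length P" "p = P ! i" using assms(2) by (auto simp: in_set_conv_nth)
  have "(c(i := Suc (c i))) j * (P ! j) s = c j * (P ! j) s + (if j = i then p s else 0)" for j s
    using i by simp
  then have "(\<Sum>j<length P. (c(i := Suc (c i))) j * (P ! j) s) = (\<Sum>j<length P. c j * (P ! j) s) + p s"
    for s using i by (simp add: sum.distrib)
  then have "(\<lambda>s. x s + p s) = (\<lambda>s. b s + (\<Sum>j<length P. (c(i := Suc (c i))) j * (P ! j) s))"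
    unfolding c by (simp add: add.assoc)
  then show ?thesis unfolding L_def by blast
qed

text \<open>Counters are capped at \<open>bound\<close>, which keeps the state space finite; the cap is never
  exceeded on a block matching \<open>b\<close> or a period.\<close>

fun step :: "('a \<Rightarrow> nat) mstate \<Rightarrow> 'a \<Rightarrow> ('a \<Rightarrow> nat) mstate" where
  "step (Count base v) s =
     (if s \<in> F then if v s < bound then Count base (v(s := Suc (v s))) else Sink
      else if s \<noteq> sep then Sink
      else if base then if v = restrF b then Count False (\<lambda>_. 0) else Sink
      else if v = (\<lambda>_. 0) then Cycle 0
      else if v \<in> restrF ` set P then Count False (\<lambda>_. 0) else Sink)"
| "step (Cycle k) s = (if s = cycle ! k then Cycle (Suc k mod length cycle) else Sink)"
| "step Sink s = Sink"

definition start :: "('a \<Rightarrow> nat) mstate" where "start = Count True (\<lambda>_. 0)"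

abbreviation words :: "(nat \<Rightarrow> 'a) set" where "words \<equiv> dba_lang step start {Cycle 0}"

definition bounded :: "('a \<Rightarrow> nat) set" where "bounded = {v. \<forall>s. v s \<le> bound}"

definition state_space :: "('a \<Rightarrow> nat) mstate set" where
  "state_space = case_prod Count ` (UNIV \<times> bounded) \<union> Cycle ` {..<length cycle} \<union> {Sink}"

lemma finite_bounded: "finite bounded"
proof (rule finite_subset)
  show "bounded \<subseteq> Pi\<^sub>E UNIV (\<lambda>_. {..bound})" by (auto simp: bounded_def PiE_iff)
qed (rule finite_PiE, auto)

lemma Count_in_state_space: "v \<in> bounded \<Longrightarrow> Count base v \<in> state_space"
  unfolding state_space_def by (intro UnI1 image_eqI[of _ _ "(base, v)"]) auto

lemma step_in_state_space:
  assumes "q \<in> state_space"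
  shows "step q s \<in> state_space"
proof -
  have cyc: "Cycle (k mod length cycle) \<in> state_space" for k
    using length_cycle_pos by (simp add: state_space_def)
  have sink: "Sink \<in> state_space" by (simp add: state_space_def)
  have zero: "Count base (\<lambda>_. 0) \<in> state_space" for base
    by (rule Count_in_state_space) (simp add: bounded_def)
  have inc: "Count base (v(s := Suc (v s))) \<in> state_space" if "v \<in> bounded" "v s < bound" for base v
    by (rule Count_in_state_space) (use that in \<open>auto simp: bounded_def\<close>)
  from assms consider base v where "q = Count base v" "v \<in> bounded" | k where "q = Cycle k"
    | "q = Sink"
    by (auto simp: state_space_def)
  then show ?thesis
  proof cases
    case 1
    have "step q s = Count base (v(s := Suc (v s))) \<and> v s < bound
        \<or> step q s \<in> {Count False (\<lambda>_. 0), Cycle 0, Sink}"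
      using 1(1) by auto
    then show ?thesis using inc[OF 1(2)] zero sink cyc[of 0] length_cycle_pos by auto
  qed (use cyc sink in simp_all)
qed

lemma dba_closed_state_space: "dba_closed state_space step start"
  unfolding dba_closed_def using finite_bounded step_in_state_space
  by (auto simp: start_def state_space_def bounded_def)

fun count_inv :: "('a \<Rightarrow> nat) mstate \<Rightarrow> ('a \<Rightarrow> nat) \<Rightarrow> bool" where
  "count_inv (Count True v) c \<longleftrightarrow> v = restrF c"
| "count_inv (Count False v) c \<longleftrightarrow> (\<exists>x\<in>L. \<forall>s. restrF c s = restrF x s + v s)"
| "count_inv (Cycle k) c \<longleftrightarrow> k = 0 \<and> (\<exists>x\<in>L. restrF c = restrF x)"
| "count_inv Sink c \<longleftrightarrow> True"

lemma count_inv_restrF_cong: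
  assumes "restrF c = restrF c'"
  shows "count_inv q c \<longleftrightarrow> count_inv q c'"
proof (cases q)
  case (Count base v)
  then show ?thesis using assms by (cases base) simp_all
qed (use assms in simp_all)

lemma count_inv_step_F:
  assumes "count_inv (Count base v) c" "t \<in> F"
  shows "count_inv (Count base (v(t := Suc (v t)))) (c(t := Suc (c t)))"
proof -
  have "restrF (c(t := Suc (c t))) = (restrF c)(t := Suc (restrF c t))"
    using assms(2) by (auto simp: restrF_def)
  then show ?thesis using assms(1) by (cases base) auto
qed

lemma step_Count_sep:
  "step (Count base v) sep =
     (if base then if v = restrF b then Count False (\<lambda>_. 0) else Sink
      else if v = (\<lambda>_. 0) then Cycle 0
      else if v \<in> restrF ` set P then Count False (\<lambda>_. 0) else Sink)"
  using sep_notin_F by simp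

lemma count_inv_step_sep:
  assumes "count_inv (Count base v) c" "step (Count base v) sep \<noteq> Sink"
  shows "count_inv (step (Count base v) sep) c"
proof (cases base)
  case True
  then have "v = restrF b" "v = restrF c"
    using assms by (simp_all add: step_Count_sep del: step.simps split: if_splits)
  then show ?thesis using True base_in_L by (auto simp: step_Count_sep simp del: step.simps)
next
  case False
  then obtain x where x: "x \<in> L" "\<forall>s. restrF c s = restrF x s + v s"
    using assms(1) by auto
  show ?thesis
  proof (cases "v = (\<lambda>_. 0)")
    case True
    then show ?thesis using False x by (auto simp: step_Count_sep simp del: step.simps)
  next
    case nonzero: False
    then obtain p where p: "p \<in> set P" "v = restrF p"
      using assms(2) False by (auto simp: step_Count_sep simp del: step.simps split: if_splits)
    have "restrF c = restrF (\<lambda>s. x s + p s)" using x(2) p(2) by (auto simp: restrF_def)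
    then show ?thesis
      using False nonzero p L_add_period[OF x(1) p(1)]
      by (auto simp: step_Count_sep simp del: step.simps)
  qed
qed

lemma count_inv_step:
  assumes "count_inv (Count base v) c" "step (Count base v) t \<noteq> Sink"
  shows "count_inv (step (Count base v) t) (c(t := Suc (c t)))"
proof (cases "t \<in> F")
  case True
  then have "v t < bound" "step (Count base v) t = Count base (v(t := Suc (v t)))"
    using assms(2) by (simp_all split: if_splits)
  then show ?thesis using count_inv_step_F[OF assms(1) True] by simp
next
  case False
  then have t: "t = sep" using assms(2) by (simp split: if_splits)
  have "count_inv (step (Count base v) t) c"
    using count_inv_step_sep[OF assms[unfolded t]] t by simp
  moreover have "restrF (c(t := Suc (c t))) = restrF c" using False by (auto simp: restrF_def)
  ultimately show ?thesis using count_inv_restrF_cong by blast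
qed

lemma run_avoids_Sink: "w \<in> words \<Longrightarrow> dba_run step start w i \<noteq> Sink"
  by (rule dba_lang_avoids_trap) auto

lemma run_follows_cycle:
  assumes "dba_run step q w n = Cycle 0" "\<And>i. dba_run step q w i \<noteq> Sink"
  shows "w (n + j) = cycle ! (j mod length cycle)"
proof -
  have run: "dba_run step q w (n + j) = Cycle (j mod length cycle)" for j
  proof (induct j)
    case 0
    then show ?case using assms(1) by simp
  next
    case (Suc j)
    then have "dba_run step q w (n + Suc j) = step (Cycle (j mod length cycle)) (w (n + j))"
      by simp
    then show ?case using assms(2)[of "n + Suc j"] by (auto simp: mod_Suc_eq split: if_splits)
  qed
  have "dba_run step q w (n + Suc j) = step (Cycle (j mod length cycle)) (w (n + j))"
    using run[of j] by simp
  then show ?thesis using assms(2)[of "n + Suc j"] by (auto split: if_splits)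
qed

lemma parikh_cycle_suffix:
  assumes "\<And>j. w (n + j) = cycle ! (j mod length cycle)"
  shows "parikh w = mask_add (count_list (map w [0..<n])) m"
proof
  fix s
  have suffix_notin_F: "w i \<notin> F" if "n \<le> i" for i
  proof -
    have "w i = cycle ! ((i - n) mod length cycle)" using assms[of "i - n"] that by simp
    then have "w i \<in> set cycle" using length_cycle_pos by simp
    then show ?thesis using set_cycle by auto
  qed
  show "parikh w s = mask_add (count_list (map w [0..<n])) m s"
  proof (cases "s \<in> F")
    case True
    then have "{i. w i = s} = {i. i < n \<and> w i = s}" using suffix_notin_F not_less by blast
    moreover have "finite {i. i < n \<and> w i = s}" by simp
    ultimately show ?thesis using True
      by (simp add: parikh_def mask_add_def F_def count_list_map_upt)
  next
    case False
    then obtain k where k: "k < length cycle" "cycle ! k = s"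
      using set_cycle by (metis ComplI in_set_conv_nth)
    have "inj (\<lambda>j. n + k + j * length cycle)" using length_cycle_pos by (auto simp: inj_def)
    moreover have "range (\<lambda>j. n + k + j * length cycle) \<subseteq> {i. w i = s}"
      using assms k by (auto simp: add.assoc)
    ultimately have "infinite {i. w i = s}" using range_inj_infinite infinite_super by blast
    then show ?thesis using False by (simp add: parikh_def mask_add_def F_def)
  qed
qed

lemma parikh_accepted:
  assumes "w \<in> words"
  shows "parikh w \<in> (\<lambda>x. mask_add x m) ` L"
proof -
  let ?r = "dba_run step start w"
  define cnt where "cnt i = count_list (map w [0..<i])" for i
  have no_Sink: "?r i \<noteq> Sink" for i using run_avoids_Sink[OF assms] .
  have "\<exists>i k. ?r i = Cycle k"
    using assms unfolding dba_lang_def INFM_nat_le by blast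
  then obtain n where n: "\<exists>k. ?r n = Cycle k" and before: "\<And>i. i < n \<Longrightarrow> \<nexists>k. ?r i = Cycle k"
    unfolding exists_least_iff[of "\<lambda>i. \<exists>k. ?r i = Cycle k"] by blast
  have inv: "count_inv (?r i) (cnt i)" if "i \<le> n" for i
    using that
  proof (induct i)
    case 0
    show ?case by (simp add: start_def cnt_def restrF_def fun_eq_iff)
  next
    case (Suc i)
    obtain base v where rv: "?r i = Count base v"
      using before[of i] no_Sink[of i] Suc.prems by (cases "?r i") auto
    have r_Suc: "?r (Suc i) = step (Count base v) (w i)" using rv by simp
    have "count_inv (Count base v) (cnt i)" using Suc rv by simp
    moreover have "step (Count base v) (w i) \<noteq> Sink" using no_Sink[of "Suc i"] r_Suc by simp
    ultimately have "count_inv (step (Count base v) (w i)) ((cnt i)(w i := Suc (cnt i (w i))))"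
      by (rule count_inv_step)
    moreover have "cnt (Suc i) = (cnt i)(w i := Suc (cnt i (w i)))" by (auto simp: cnt_def)
    ultimately show ?case by (simp only: r_Suc)
  qed
  from n inv[of n] obtain x where x: "?r n = Cycle 0" "x \<in> L" "restrF (cnt n) = restrF x"
    by auto
  have "parikh w = mask_add (cnt n) m"
    unfolding cnt_def by (rule parikh_cycle_suffix, rule run_follows_cycle) (use x no_Sink in auto)
  also have "\<dots> = mask_add x m"
    by (rule mask_add_cong) (metis x(3) restrF_def)
  finally show ?thesis using x(2) by blast
qed

definition enum_F :: "'a list" where "enum_F = (SOME xs. set xs = F \<and> distinct xs)"

lemma set_enum_F: "set enum_F = F" and distinct_enum_F: "distinct enum_F"
proof -
  have "\<exists>xs. set xs = F \<and> distinct xs" by (rule finite_distinct_list) simp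
  then have "set enum_F = F \<and> distinct enum_F" unfolding enum_F_def by (rule someI_ex)
  then show "set enum_F = F" "distinct enum_F" by auto
qed

definition word_of :: "('a \<Rightarrow> nat) \<Rightarrow> 'a list" where
  "word_of v = concat (map (\<lambda>t. replicate (v t) t) enum_F)"

lemma set_word_of: "set (word_of v) \<subseteq> F"
proof
  fix t assume "t \<in> set (word_of v)"
  then have "t \<in> set enum_F" by (auto simp: word_of_def split: if_splits)
  then show "t \<in> F" using set_enum_F by simp
qed

lemma count_list_word_of: "count_list (word_of v) s = restrF v s"
proof -
  have "count_list (word_of v) s = sum_list (map (\<lambda>t. if t = s then v t else 0) enum_F)"
    by (simp add: word_of_def count_list_concat comp_def count_list_replicate)
  also have "\<dots> = (\<Sum>t\<in>F. if t = s then v t else 0)"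
    using set_enum_F distinct_enum_F by (simp add: sum_list_distinct_conv_sum_set)
  also have "\<dots> = restrF v s" by (simp add: restrF_def)
  finally show ?thesis .
qed

lemma foldl_step_F_letters:
  assumes "set xs \<subseteq> F" "\<And>s. u s + count_list xs s \<le> bound"
  shows "foldl step (Count base u) xs = Count base (\<lambda>s. u s + count_list xs s)"
  using assms
proof (induct xs arbitrary: u)
  case Nil
  then show ?case by simp
next
  case (Cons a xs)
  have "a \<in> F" "u a < bound" using Cons.prems(1) Cons.prems(2)[of a] by auto
  then have "foldl step (Count base u) (a # xs) = foldl step (Count base (u(a := Suc (u a)))) xs"
    by simp
  also have "\<dots> = Count base (\<lambda>s. (u(a := Suc (u a))) s + count_list xs s)"
  proof (rule Cons.hyps)
    show "(u(a := Suc (u a))) s + count_list xs s \<le> bound" for s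
      using Cons.prems(2)[of s] by (auto split: if_splits)
  qed (use Cons.prems(1) in simp)
  also have "(\<lambda>s. (u(a := Suc (u a))) s + count_list xs s) = (\<lambda>s. u s + count_list (a # xs) s)"
    by auto
  finally show ?case .
qed

lemma foldl_step_word_of:
  assumes "\<And>s. y s \<le> bound"
  shows "foldl step (Count base (\<lambda>_. 0)) (word_of y) = Count base (restrF y)"
  using foldl_step_F_letters[OF set_word_of, of "\<lambda>_. 0" y base] assms
  by (simp add: count_list_word_of restrF_def[abs_def])

definition block :: "('a \<Rightarrow> nat) \<Rightarrow> 'a list" where "block p = word_of p @ [sep]"

lemma count_list_block: "s \<in> F \<Longrightarrow> count_list (block p) s = p s"
  using sep_notin_F by (auto simp: block_def count_list_word_of restrF_def)

lemma foldl_step_block: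
  assumes "p \<in> set P" "restrF p \<noteq> (\<lambda>_. 0)"
  shows "foldl step (Count False (\<lambda>_. 0)) (block p) = Count False (\<lambda>_. 0)"
  using foldl_step_word_of[of p False] period_le_bound[OF assms(1)] assms
  by (simp add: block_def step_Count_sep del: step.simps)

text \<open>Periods vanishing on \<open>F\<close> are skipped: their (empty) block would commit to the cycle,
  and they do not contribute to the counts on \<open>F\<close> anyway.\<close>

definition blocks :: "(nat \<Rightarrow> nat) \<Rightarrow> 'a list" where
  "blocks c = concat (map (\<lambda>i. if restrF (P ! i) = (\<lambda>_. 0) then []
     else concat (replicate (c i) (block (P ! i)))) [0..<length P])"

lemma foldl_step_blocks: "foldl step (Count False (\<lambda>_. 0)) (blocks c) = Count False (\<lambda>_. 0)"
  unfolding blocks_def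
  by (rule foldl_concat_fixpoint) (auto intro!: foldl_concat_fixpoint foldl_step_block)

lemma count_list_blocks:
  assumes "s \<in> F"
  shows "count_list (blocks c) s = (\<Sum>i<length P. c i * (P ! i) s)"
proof -
  have "count_list (if restrF (P ! i) = (\<lambda>_. 0) then [] else concat (replicate (c i) (block (P ! i)))) s
      = c i * (P ! i) s" for i
    using assms by (auto simp: count_list_concat_replicate count_list_block restrF_def fun_eq_iff)
  then show ?thesis
    by (simp add: blocks_def count_list_concat comp_def interv_sum_list_conv_sum_set_nat
        atLeast0LessThan)
qed

definition extend_cycle :: "'a list \<Rightarrow> nat \<Rightarrow> 'a" where
  "extend_cycle u i = (if i < length u then u ! i else cycle ! ((i - length u) mod length cycle))"

lemma map_extend_cycle: "map (extend_cycle u) [0..<length u] = u"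
  by (rule nth_equalityI) (auto simp: extend_cycle_def)

lemma extend_cycle_suffix: "extend_cycle u (length u + j) = cycle ! (j mod length cycle)"
  by (simp add: extend_cycle_def)

lemma extend_cycle_accepted:
  assumes "foldl step start u = Cycle 0"
  shows "extend_cycle u \<in> words"
  unfolding dba_lang_def INFM_nat_le
proof (intro CollectI allI)
  let ?r = "dba_run step start (extend_cycle u)"
  fix M
  have "?r (length u) = Cycle 0" using assms by (simp add: dba_run_eq_foldl map_extend_cycle)
  then have "?r (length u + j) = Cycle (j mod length cycle)" for j
    by (induct j) (simp_all add: extend_cycle_suffix mod_Suc_eq)
  then have "?r (length u + M * length cycle) \<in> {Cycle 0}" by simp
  moreover have "M * 1 \<le> M * length cycle" using length_cycle_pos by (intro mult_le_mono2) linarith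
  then have "M \<le> length u + M * length cycle" by linarith
  ultimately show "\<exists>n\<ge>M. ?r n \<in> {Cycle 0}" by blast
qed

lemma mask_add_in_parikh_words:
  assumes "x \<in> L"
  shows "mask_add x m \<in> parikh ` words"
proof -
  obtain c where x: "x = (\<lambda>s. b s + (\<Sum>i<length P. c i * (P ! i) s))"
    using assms by (auto simp: L_def)
  define u where "u = word_of b @ sep # blocks c @ [sep]"
  have "foldl step start u = Cycle 0"
    using foldl_step_word_of[of b True] base_le_bound foldl_step_blocks[of c]
    by (simp add: u_def start_def step_Count_sep del: step.simps)
  then have accepted: "extend_cycle u \<in> words" by (rule extend_cycle_accepted)
  have "parikh (extend_cycle u) = mask_add (count_list u) m"
    using parikh_cycle_suffix[of "extend_cycle u" "length u"]
    by (simp add: extend_cycle_suffix map_extend_cycle)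
  also have "\<dots> = mask_add x m"
    by (rule mask_add_cong)
      (use sep_notin_F in \<open>auto simp: u_def count_list_word_of count_list_blocks x restrF_def\<close>)
  finally show ?thesis using accepted by (metis image_eqI)
qed

lemma parikh_words: "parikh ` words = (\<lambda>x. mask_add x m) ` L"
  using parikh_accepted mask_add_in_parikh_words by blast

lemma det_buchi_parikh_image_L: "det_buchi_parikh_image ((\<lambda>x. mask_add x m) ` L)"
  using det_buchi_parikh_image_dba[OF dba_closed_state_space, of "{Cycle 0}"]
  by (simp add: parikh_words)

end

lemma det_buchi_parikh_image_masked_linear:
  fixes m :: "'a::finite \<Rightarrow> enat"
  assumes "is_mask m" "linear_set X"
  shows "det_buchi_parikh_image ((\<lambda>x. mask_add x m) ` X)"
proof -
  obtain b P where X: "X = {x. \<exists>c :: nat \<Rightarrow> nat. x = (\<lambda>s. b s + (\<Sum>i<length P. c i * (P ! i) s))}"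
    using assms(2) by (auto simp: linear_set_def)
  interpret masked_linear m b P by unfold_locales (rule assms(1))
  show ?thesis using det_buchi_parikh_image_L by (simp add: X L_def)
qed

lemma det_buchi_parikh_image_masked_semilinear:
  fixes m :: "'a::finite \<Rightarrow> enat"
  assumes "is_mask m" "semilinear X"
  shows "det_buchi_parikh_image ((\<lambda>x. mask_add x m) ` X)"
proof -
  obtain Ls where "finite Ls" "\<forall>Y\<in>Ls. linear_set Y" "X = \<Union>Ls"
    using assms(2) by (auto simp: semilinear_def)
  then show ?thesis
    using det_buchi_parikh_image_UN[of Ls "\<lambda>Y. (\<lambda>x. mask_add x m) ` Y"]
      det_buchi_parikh_image_masked_linear[OF assms(1)]
    by (simp add: image_Union)
qed

theorem lemma3:
  fixes S :: "('a::finite \<Rightarrow> enat) set"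
  assumes "S \<subseteq> {v. \<exists>s. v s = \<infinity>}"
    and "masked_semilinear S"
  shows "\<exists>A :: 'a nba. wf_nba A \<and> deterministic A \<and> parikh ` Jclos A = S"
proof -
  obtain Sm where Sm: "\<And>m. is_mask m \<Longrightarrow> semilinear (Sm m)"
    and S: "S = (\<Union>m\<in>{m. is_mask m}. (\<lambda>x. mask_add x m) ` Sm m)"
    using assms(2) by (auto simp: masked_semilinear_def)
  have "det_buchi_parikh_image S"
    unfolding S using finite_masks
    by (rule det_buchi_parikh_image_UN) (simp add: Sm det_buchi_parikh_image_masked_semilinear)
  then show ?thesis by (simp add: det_buchi_parikh_image_def parikh_Jclos)
qed

end
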